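(* Let $(V,\mathcal H,\iota,W)$ be a generalized functional theory and $k$ a positive integer. Then $\mathrm{conv}_k(\iota^*(\mathcal P))=\bar\iota^*(\bar{\mathcal P})$, where $\bar\iota:V\to i\mathfrak u(\mathcal H\otimes\mathbb C^k)$, $\bar\iota(v)=\iota(v)\otimes\mathbb 1$, and $\bar{\mathcal P}$ is the set of pure states on $\mathcal H\otimes\mathbb C^k$.
   Context: A generalized functional theory is a tuple $(V,\mathcal H,\iota,W)$ with $V$ a finite-dimensional real vector space, $\mathcal H$ a finite-dimensional complex Hilbert space, $\iota:V\to i\mathfrak u(\mathcal H)$ linear into the Hermitian operators, $W$ Hermitian. Density operators on a Hilbert space $\mathcal K$ are regarded as elements of $(i\mathfrak u(\mathcal K))^*$ via the trace pairing; $\iota^*$ and $\bar\iota^*$ are the dual maps. $\mathcal P$ is the set of pure states (rank-one projectors) on $\mathcal H$. For a subset $X$ of a vector space, $\mathrm{conv}_k(X)=\{\sum_{i=1}^k t_is_i: s_i\in X, t_i\ge0,\sum_i t_i=1\}$. *)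

theory Defs
  imports "HOL-Analysis.Analysis" "Jordan_Normal_Form.Matrix"
begin

text \<open>Hilbert space H = C^n; operators are n x n complex matrices.\<close>

definition mtrace :: "complex mat \<Rightarrow> complex" where
  "mtrace A = (\<Sum>i<dim_row A. A $$ (i, i))"

definition hermitian_mat :: "nat \<Rightarrow> complex mat \<Rightarrow> bool" where
  "hermitian_mat n A \<longleftrightarrow> A \<in> carrier_mat n n \<and>
     (\<forall>i<n. \<forall>j<n. A $$ (j, i) = cnj (A $$ (i, j)))"

definition gen_functional_theory ::
  "nat \<Rightarrow> ('v::euclidean_space \<Rightarrow> complex mat) \<Rightarrow> complex mat \<Rightarrow> bool" where
  "gen_functional_theory n \<iota> W \<longleftrightarrow>
     (\<forall>v. hermitian_mat n (\<iota> v)) \<and>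
     (\<forall>x y. \<iota> (x + y) = \<iota> x + \<iota> y) \<and>
     (\<forall>c x. \<iota> (c *\<^sub>R x) = complex_of_real c \<cdot>\<^sub>m \<iota> x) \<and>
     hermitian_mat n W"

definition pure_states :: "nat \<Rightarrow> complex mat set" where
  "pure_states m = {mat m m (\<lambda>(i, j). \<psi> $ i * cnj (\<psi> $ j)) | \<psi>.
       \<psi> \<in> carrier_vec m \<and> (\<Sum>i<m. (cmod (\<psi> $ i))\<^sup>2) = 1}"

text \<open>Dual map iota^*: a density operator rho is sent to the functional
v \<mapsto> tr(rho iota(v)) on V (real, since both are Hermitian).\<close>

definition dual_map :: "('v \<Rightarrow> complex mat) \<Rightarrow> complex mat \<Rightarrow> ('v \<Rightarrow> real)" where
  "dual_map \<iota> \<rho> = (\<lambda>v. Re (mtrace (\<rho> * \<iota> v)))"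

text \<open>A \<otimes> 1 on C^n \<otimes> C^k = C^(n k), basis e_a \<otimes> e_i indexed by a * k + i.\<close>

definition tensor_id :: "nat \<Rightarrow> complex mat \<Rightarrow> complex mat" where
  "tensor_id k A = mat (dim_row A * k) (dim_col A * k)
     (\<lambda>(p, q). if p mod k = q mod k then A $$ (p div k, q div k) else 0)"

definition conv_k :: "nat \<Rightarrow> ('v \<Rightarrow> real) set \<Rightarrow> ('v \<Rightarrow> real) set" where
  "conv_k k X = {f. \<exists>s t. (\<forall>i<k. s i \<in> X \<and> t i \<ge> 0) \<and> (\<Sum>i<k. t i) = 1 \<and>
       f = (\<lambda>v. \<Sum>i<k. t i * s i v)}"

end

theory Submission
  imports Defs
begin

(* Index C^n \<otimes> C^k by a * k + i, so that a vector \<psi> on the product is a family of k blocks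
   \<psi>_i = (\<psi> (a * k + i))_a in C^n.  Write \<psi>_i = sqrt t_i \<phi>_i with t_i = |\<psi>_i|^2 and \<phi>_i a unit
   vector.  Then |\<psi>|^2 = \<Sum>_i t_i, and the expectation of A \<otimes> 1 in \<psi> is \<Sum>_i t_i <\<phi>_i, A \<phi>_i>
   because A \<otimes> 1 does not mix blocks.  So a pure state on the product is sent to the convex
   combination of k pure-state functionals with weights t_i, and gluing the blocks sqrt t_i \<phi>_i
   together reverses this. *)

unbundle no vec_syntax

lemma sum_lessThan_mult_nat:
  fixes f :: "nat \<Rightarrow> 'a::comm_monoid_add"
  shows "(\<Sum>p<n * k. f p) = (\<Sum>a<n. \<Sum>i<k. f (a * k + i))"
proof -
  have "(\<Sum>p\<in>{a * k..<a * k + k}. f p) = (\<Sum>i<k. f (a * k + i))" for a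
    using sum.shift_bounds_nat_ivl[of f 0 "a * k" k] by (simp add: add.commute lessThan_atLeast0)
  then show ?thesis
    by (simp flip: sum.nat_group)
qed

lemma mult_add_less_mult:
  fixes a i n k :: nat
  assumes "a < n" "i < k"
  shows "a * k + i < n * k"
proof -
  have "Suc a * k \<le> n * k"
    using assms(1) by (intro mult_le_mono1) simp
  then show ?thesis
    using assms(2) by simp
qed

lemma conv_k_image:
  "conv_k k (g ` X) = {(\<lambda>v. \<Sum>i<k. t i * g (x i) v) | t x.
     (\<forall>i<k. x i \<in> X \<and> t i \<ge> 0) \<and> (\<Sum>i<k. t i) = 1}"
proof (intro antisym subsetI)
  fix f assume "f \<in> conv_k k (g ` X)"
  then obtain s t where st: "\<forall>i<k. s i \<in> g ` X \<and> t i \<ge> 0" "(\<Sum>i<k. t i) = 1"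
    and f: "f = (\<lambda>v. \<Sum>i<k. t i * s i v)"
    unfolding conv_k_def by blast
  have "\<forall>i. \<exists>y. i < k \<longrightarrow> y \<in> X \<and> s i = g y"
    using st(1) by blast
  then obtain x where "\<forall>i<k. x i \<in> X \<and> s i = g (x i)"
    by metis
  then show "f \<in> {(\<lambda>v. \<Sum>i<k. t i * g (x i) v) | t x.
     (\<forall>i<k. x i \<in> X \<and> t i \<ge> 0) \<and> (\<Sum>i<k. t i) = 1}"
    using st f by (intro CollectI exI[of _ t] exI[of _ x]) simp
next
  fix f assume "f \<in> {(\<lambda>v. \<Sum>i<k. t i * g (x i) v) | t x.
     (\<forall>i<k. x i \<in> X \<and> t i \<ge> 0) \<and> (\<Sum>i<k. t i) = 1}"
  then obtain t x where "\<forall>i<k. x i \<in> X \<and> t i \<ge> 0" "(\<Sum>i<k. t i) = 1"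
    and "f = (\<lambda>v. \<Sum>i<k. t i * g (x i) v)"
    by blast
  then show "f \<in> conv_k k (g ` X)"
    unfolding conv_k_def by (intro CollectI exI[of _ "\<lambda>i. g (x i)"] exI[of _ t]) simp
qed

definition proj_mat :: "nat \<Rightarrow> complex vec \<Rightarrow> complex mat" where
  "proj_mat m \<psi> = mat m m (\<lambda>(i, j). \<psi> $ i * cnj (\<psi> $ j))"

definition normalized_vecs :: "nat \<Rightarrow> complex vec set" where
  "normalized_vecs m = {\<psi> \<in> carrier_vec m. (\<Sum>i<m. (cmod (\<psi> $ i))\<^sup>2) = 1}"

lemma pure_states_eq_proj_mat_image: "pure_states m = proj_mat m ` normalized_vecs m"
  unfolding pure_states_def proj_mat_def normalized_vecs_def by auto

lemma unit_vec_normalized_vecs: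
  assumes "j < n"
  shows "unit_vec n j \<in> normalized_vecs n"
proof -
  have "(cmod (unit_vec n j $ i))\<^sup>2 = (if i = j then 1 else 0)" if "i < n" for i
    using that by (simp add: unit_vec_def)
  then show ?thesis
    using assms by (simp add: normalized_vecs_def)
qed

definition expval :: "nat \<Rightarrow> (nat \<Rightarrow> complex) \<Rightarrow> complex mat \<Rightarrow> complex" where
  "expval n \<phi> A = (\<Sum>a<n. \<Sum>b<n. \<phi> a * cnj (\<phi> b) * A $$ (b, a))"

lemma mtrace_proj_mat_mult:
  assumes "A \<in> carrier_mat m m"
  shows "mtrace (proj_mat m \<psi> * A) = expval m (($) \<psi>) A"
  using assms unfolding mtrace_def proj_mat_def expval_def
  by (auto simp: scalar_prod_def sum_distrib_left ac_simps intro!: sum.cong)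

lemma expval_cong: "(\<And>a. a < n \<Longrightarrow> \<phi> a = \<theta> a) \<Longrightarrow> expval n \<phi> A = expval n \<theta> A"
  unfolding expval_def by (intro sum.cong refl) auto

lemma expval_scale:
  "expval n (\<lambda>a. complex_of_real c * \<phi> a) A = complex_of_real (c\<^sup>2) * expval n \<phi> A"
  unfolding expval_def by (simp add: sum_distrib_left power2_eq_square ac_simps)

lemma tensor_id_carrier_mat: "A \<in> carrier_mat n n \<Longrightarrow> tensor_id k A \<in> carrier_mat (n * k) (n * k)"
  unfolding tensor_id_def by auto

lemma expval_tensor_id:
  assumes "A \<in> carrier_mat n n"
  shows "expval (n * k) \<psi> (tensor_id k A) = (\<Sum>i<k. expval n (\<lambda>a. \<psi> (a * k + i)) A)"
proof -
  have entry: "tensor_id k A $$ (b * k + j, a * k + i) = (if j = i then A $$ (b, a) else 0)"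
    if "a < n" "b < n" "i < k" "j < k" for a b i j
    using that assms mult_add_less_mult[OF that(1,3)] mult_add_less_mult[OF that(2,4)]
    by (simp add: tensor_id_def)
  have "expval (n * k) \<psi> (tensor_id k A) = (\<Sum>a<n. \<Sum>i<k. \<Sum>b<n. \<Sum>j<k.
      \<psi> (a * k + i) * cnj (\<psi> (b * k + j)) * tensor_id k A $$ (b * k + j, a * k + i))"
    unfolding expval_def by (simp add: sum_lessThan_mult_nat)
  also have "\<dots> = (\<Sum>a<n. \<Sum>i<k. \<Sum>b<n. \<psi> (a * k + i) * cnj (\<psi> (b * k + i)) * A $$ (b, a))"
    by (intro sum.cong refl) (simp add: entry if_distrib cong: if_cong)
  also have "\<dots> = (\<Sum>i<k. expval n (\<lambda>a. \<psi> (a * k + i)) A)"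
    unfolding expval_def by (rule sum.swap)
  finally show ?thesis .
qed

lemma expval_tensor_id_blocks:
  assumes "A \<in> carrier_mat n n" and "\<forall>i<k. t i \<ge> 0"
    and "\<And>a i. a < n \<Longrightarrow> i < k \<Longrightarrow> \<psi> (a * k + i) = complex_of_real (sqrt (t i)) * \<phi> i a"
  shows "expval (n * k) \<psi> (tensor_id k A) = (\<Sum>i<k. complex_of_real (t i) * expval n (\<phi> i) A)"
  unfolding expval_tensor_id[OF assms(1)]
proof (rule sum.cong)
  fix i assume "i \<in> {..<k}"
  then have "expval n (\<lambda>a. \<psi> (a * k + i)) A
      = expval n (\<lambda>a. complex_of_real (sqrt (t i)) * \<phi> i a) A"
    using assms(3) by (intro expval_cong) simp
  also have "\<dots> = complex_of_real (t i) * expval n (\<phi> i) A"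
    using \<open>i \<in> {..<k}\<close> assms(2) by (simp add: expval_scale)
  finally show "expval n (\<lambda>a. \<psi> (a * k + i)) A = complex_of_real (t i) * expval n (\<phi> i) A" .
qed simp

lemma dual_map_tensor_id_blocks:
  assumes "\<And>v. \<iota> v \<in> carrier_mat n n" and "\<forall>i<k. t i \<ge> 0"
    and "\<And>a i. a < n \<Longrightarrow> i < k \<Longrightarrow> \<psi> $ (a * k + i) = complex_of_real (sqrt (t i)) * \<phi> i $ a"
  shows "dual_map (\<lambda>v. tensor_id k (\<iota> v)) (proj_mat (n * k) \<psi>)
    = (\<lambda>v. \<Sum>i<k. t i * dual_map \<iota> (proj_mat n (\<phi> i)) v)"
proof
  fix v
  have "expval (n * k) (($) \<psi>) (tensor_id k (\<iota> v))
      = (\<Sum>i<k. complex_of_real (t i) * expval n (($) (\<phi> i)) (\<iota> v))"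
    using assms by (intro expval_tensor_id_blocks) auto
  then show "dual_map (\<lambda>v. tensor_id k (\<iota> v)) (proj_mat (n * k) \<psi>) v
      = (\<Sum>i<k. t i * dual_map \<iota> (proj_mat n (\<phi> i)) v)"
    by (simp add: dual_map_def mtrace_proj_mat_mult assms(1) tensor_id_carrier_mat Re_sum)
qed

lemma sum_cmod_sq_blocks:
  fixes n k :: nat and \<psi> :: "nat \<Rightarrow> complex"
  assumes "\<forall>i<k. t i \<ge> 0"
    and "\<And>a i. a < n \<Longrightarrow> i < k \<Longrightarrow> \<psi> (a * k + i) = complex_of_real (sqrt (t i)) * \<phi> i a"
  shows "(\<Sum>p<n * k. (cmod (\<psi> p))\<^sup>2) = (\<Sum>i<k. t i * (\<Sum>a<n. (cmod (\<phi> i a))\<^sup>2))"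
proof -
  have "(\<Sum>p<n * k. (cmod (\<psi> p))\<^sup>2) = (\<Sum>a<n. \<Sum>i<k. (cmod (\<psi> (a * k + i)))\<^sup>2)"
    by (rule sum_lessThan_mult_nat)
  also have "\<dots> = (\<Sum>a<n. \<Sum>i<k. t i * (cmod (\<phi> i a))\<^sup>2)"
    using assms by (intro sum.cong refl) (simp add: norm_mult power_mult_distrib)
  also have "\<dots> = (\<Sum>i<k. t i * (\<Sum>a<n. (cmod (\<phi> i a))\<^sup>2))"
    by (simp add: sum.swap[of _ "{..<n}"] sum_distrib_left)
  finally show ?thesis .
qed

lemma normalized_vecs_glue_blocks:
  assumes "\<forall>i<k. t i \<ge> 0" and "(\<Sum>i<k. t i) = 1" and "\<forall>i<k. \<phi> i \<in> normalized_vecs n"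
  obtains \<psi> where "\<psi> \<in> normalized_vecs (n * k)"
    and "\<And>a i. a < n \<Longrightarrow> i < k \<Longrightarrow> \<psi> $ (a * k + i) = complex_of_real (sqrt (t i)) * \<phi> i $ a"
proof
  define \<psi> where "\<psi> = vec (n * k) (\<lambda>p. complex_of_real (sqrt (t (p mod k))) * \<phi> (p mod k) $ (p div k))"
  show blocks: "\<psi> $ (a * k + i) = complex_of_real (sqrt (t i)) * \<phi> i $ a" if "a < n" "i < k" for a i
    using mult_add_less_mult[OF that] that by (simp add: \<psi>_def)
  have "(\<Sum>p<n * k. (cmod (\<psi> $ p))\<^sup>2) = (\<Sum>i<k. t i * (\<Sum>a<n. (cmod (\<phi> i $ a))\<^sup>2))"
    using assms(1) blocks by (rule sum_cmod_sq_blocks)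
  also have "\<dots> = 1"
    using assms by (simp add: normalized_vecs_def)
  finally show "\<psi> \<in> normalized_vecs (n * k)"
    by (simp add: normalized_vecs_def \<psi>_def)
qed

lemma normalized_vecs_split_blocks:
  assumes "\<psi> \<in> normalized_vecs (n * k)"
  obtains t \<phi> where "\<forall>i<k. t i \<ge> 0" and "(\<Sum>i<k. t i) = 1" and "\<forall>i<k. \<phi> i \<in> normalized_vecs n"
    and "\<And>a i. a < n \<Longrightarrow> i < k \<Longrightarrow> \<psi> $ (a * k + i) = complex_of_real (sqrt (t i)) * \<phi> i $ a"
proof
  define t where "t i = (\<Sum>a<n. (cmod (\<psi> $ (a * k + i)))\<^sup>2)" for i
  \<comment> \<open>a block of norm 0 has weight 0, so any unit vector can serve as its direction\<close>
  define \<phi> where "\<phi> i = (if t i = 0 then unit_vec n 0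
    else vec n (\<lambda>a. \<psi> $ (a * k + i) / complex_of_real (sqrt (t i))))" for i
  have t_nonneg: "t i \<ge> 0" for i
    unfolding t_def by (intro sum_nonneg) auto
  then show "\<forall>i<k. t i \<ge> 0" by simp
  have "(\<Sum>i<k. t i) = (\<Sum>p<n * k. (cmod (\<psi> $ p))\<^sup>2)"
    unfolding t_def sum_lessThan_mult_nat by (rule sum.swap)
  then show "(\<Sum>i<k. t i) = 1"
    using assms by (simp add: normalized_vecs_def)
  have "n > 0"
    using assms by (cases n) (auto simp: normalized_vecs_def)
  show "\<forall>i<k. \<phi> i \<in> normalized_vecs n"
  proof (intro allI impI)
    fix i
    show "\<phi> i \<in> normalized_vecs n"
    proof (cases "t i = 0")
      case True
      then show ?thesis
        using \<open>n > 0\<close> by (simp add: \<phi>_def unit_vec_normalized_vecs)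
    next
      case False
      have "(\<Sum>a<n. (cmod (\<phi> i $ a))\<^sup>2) = (\<Sum>a<n. (cmod (\<psi> $ (a * k + i)))\<^sup>2 / t i)"
        using False t_nonneg[of i] by (intro sum.cong refl) (simp add: \<phi>_def norm_divide power_divide)
      also have "\<dots> = 1"
        using False by (simp add: t_def flip: sum_divide_distrib)
      finally show ?thesis
        by (simp add: normalized_vecs_def \<phi>_def)
    qed
  qed
  show "\<psi> $ (a * k + i) = complex_of_real (sqrt (t i)) * \<phi> i $ a" if "a < n" "i < k" for a i
  proof (cases "t i = 0")
    case True
    have "\<forall>b\<in>{..<n}. (cmod (\<psi> $ (b * k + i)))\<^sup>2 = 0"
      using True unfolding t_def by (subst sum_nonneg_eq_0_iff[symmetric]) auto
    then show ?thesis
      using True \<open>a < n\<close> by simp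
  next
    case False
    then have "\<phi> i $ a = \<psi> $ (a * k + i) / complex_of_real (sqrt (t i))"
      using \<open>a < n\<close> by (simp add: \<phi>_def)
    then show ?thesis
      using False t_nonneg[of i] by simp
  qed
qed

lemma conv_k_dual_map_pure_states:
  assumes carrier: "\<And>v. \<iota> v \<in> carrier_mat n n"
  shows "conv_k k (dual_map \<iota> ` pure_states n) =
    dual_map (\<lambda>v. tensor_id k (\<iota> v)) ` pure_states (n * k)"
proof (intro antisym subsetI)
  fix f assume "f \<in> conv_k k (dual_map \<iota> ` pure_states n)"
  then obtain t \<phi> where weights: "\<forall>i<k. t i \<ge> 0" "(\<Sum>i<k. t i) = 1"
    and normalized: "\<forall>i<k. \<phi> i \<in> normalized_vecs n"
    and f: "f = (\<lambda>v. \<Sum>i<k. t i * dual_map \<iota> (proj_mat n (\<phi> i)) v)"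
    unfolding pure_states_eq_proj_mat_image image_image conv_k_image by blast
  obtain \<psi> where \<psi>: "\<psi> \<in> normalized_vecs (n * k)"
    and blocks: "\<And>a i. a < n \<Longrightarrow> i < k \<Longrightarrow>
      \<psi> $ (a * k + i) = complex_of_real (sqrt (t i)) * \<phi> i $ a"
    using normalized_vecs_glue_blocks[OF weights normalized] by metis
  have "f = dual_map (\<lambda>v. tensor_id k (\<iota> v)) (proj_mat (n * k) \<psi>)"
    unfolding f using carrier weights(1) blocks by (rule dual_map_tensor_id_blocks[symmetric])
  with \<psi> show "f \<in> dual_map (\<lambda>v. tensor_id k (\<iota> v)) ` pure_states (n * k)"
    unfolding pure_states_eq_proj_mat_image by blast
next
  fix f assume "f \<in> dual_map (\<lambda>v. tensor_id k (\<iota> v)) ` pure_states (n * k)"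
  then obtain \<psi> where \<psi>: "\<psi> \<in> normalized_vecs (n * k)"
    and f: "f = dual_map (\<lambda>v. tensor_id k (\<iota> v)) (proj_mat (n * k) \<psi>)"
    unfolding pure_states_eq_proj_mat_image by blast
  obtain t \<phi> where weights: "\<forall>i<k. t i \<ge> 0" "(\<Sum>i<k. t i) = 1"
    and normalized: "\<forall>i<k. \<phi> i \<in> normalized_vecs n"
    and blocks: "\<And>a i. a < n \<Longrightarrow> i < k \<Longrightarrow>
      \<psi> $ (a * k + i) = complex_of_real (sqrt (t i)) * \<phi> i $ a"
    using normalized_vecs_split_blocks[OF \<psi>] by metis
  have "f = (\<lambda>v. \<Sum>i<k. t i * dual_map \<iota> (proj_mat n (\<phi> i)) v)"
    unfolding f using carrier weights(1) blocks by (rule dual_map_tensor_id_blocks)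
  with weights normalized show "f \<in> conv_k k (dual_map \<iota> ` pure_states n)"
    unfolding pure_states_eq_proj_mat_image image_image conv_k_image by blast
qed

theorem lemma2p38:
  fixes n k :: nat and \<iota> :: "'v::euclidean_space \<Rightarrow> complex mat" and W :: "complex mat"
  assumes "gen_functional_theory n \<iota> W"
    and "k > 0"
  shows "conv_k k (dual_map \<iota> ` pure_states n) =
         dual_map (\<lambda>v. tensor_id k (\<iota> v)) ` pure_states (n * k)"
proof -
  have "\<iota> v \<in> carrier_mat n n" for v
    using assms(1) unfolding gen_functional_theory_def hermitian_mat_def by blast
  then show ?thesis
    by (rule conv_k_dual_map_pure_states)
qed

end
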